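(* Let $P$ be a profile of linear orders on a finite set $A$ which is single-crossing with respect to some tree on its voter set. Let $\mathcal{D}(P)$ be the set of distinct linear orders occurring in $P$. Then $\mathcal{D}(P)$ is a Condorcet domain.
   Context: A profile is a finite tuple of linear orders on $A$, one for each voter; voter $i$ prefers $a$ to $b$, written $a\succ_i b$. Given a tree $T=(V,E)$ whose vertex set $V$ is the set of voters, the profile is single-crossing with respect to $T$ if for every pair of distinct alternatives $a,b$ one of the following holds: (i) there is an edge $e\in E$ such that, removing $e$ from $T$, the two resulting subtrees have vertex sets $V_1,V_2$ with all voters in $V_1$ preferring $a$ to $b$ and all voters in $V_2$ preferring $b$ to $a$; or (ii) all voters prefer $a$ to $b$, or all voters prefer $b$ to $a$. The strict majority relation of a profile: $a\succ b$ iff strictly more voters prefer $a$ to $b$ than prefer $b$ to $a$. A set $C$ of linear orders on $A$ is a Condorcet domain if for every profile (with any finite number of voters) all of whose orders belong to $C$, the strict majority relation of that profile is transitive. *)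

theory Defs
  imports Main
begin

text \<open>A linear order on A, given as the strict preference relation: (a,b) \<in> R means a is preferred to b.\<close>
definition lin_order :: "'a set \<Rightarrow> 'a rel \<Rightarrow> bool" where
  "lin_order A R \<longleftrightarrow> R \<subseteq> A \<times> A \<and> trans R \<and> irrefl R \<and> total_on A R"

definition graph :: "'v set \<Rightarrow> 'v set set \<Rightarrow> bool" where
  "graph V E \<longleftrightarrow> (\<forall>e\<in>E. \<exists>u w. u \<in> V \<and> w \<in> V \<and> u \<noteq> w \<and> e = {u, w})"

definition walk :: "'v set \<Rightarrow> 'v set set \<Rightarrow> 'v list \<Rightarrow> bool" where
  "walk V E xs \<longleftrightarrow> xs \<noteq> [] \<and> set xs \<subseteq> V \<and>
     (\<forall>i. Suc i < length xs \<longrightarrow> {xs ! i, xs ! Suc i} \<in> E)"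

definition reachable :: "'v set \<Rightarrow> 'v set set \<Rightarrow> 'v \<Rightarrow> 'v \<Rightarrow> bool" where
  "reachable V E u w \<longleftrightarrow> (\<exists>xs. walk V E xs \<and> hd xs = u \<and> last xs = w)"

definition component :: "'v set \<Rightarrow> 'v set set \<Rightarrow> 'v \<Rightarrow> 'v set" where
  "component V E u = {w. reachable V E u w}"

definition connected_graph :: "'v set \<Rightarrow> 'v set set \<Rightarrow> bool" where
  "connected_graph V E \<longleftrightarrow> (\<forall>u\<in>V. \<forall>w\<in>V. reachable V E u w)"

definition has_cycle :: "'v set \<Rightarrow> 'v set set \<Rightarrow> bool" where
  "has_cycle V E \<longleftrightarrow> (\<exists>xs. walk V E xs \<and> distinct xs \<and> length xs \<ge> 3 \<and>
      {last xs, hd xs} \<in> E)"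

definition tree :: "'v set \<Rightarrow> 'v set set \<Rightarrow> bool" where
  "tree V E \<longleftrightarrow> finite V \<and> V \<noteq> {} \<and> graph V E \<and> connected_graph V E \<and> \<not> has_cycle V E"

text \<open>Profile P on voters V (each voter has a linear order on A) is single-crossing w.r.t. tree (V,E).
  Removing edge {u,w} gives the two subtrees: components of u and of w in (V, E - {{u,w}}).\<close>
definition single_crossing_tree ::
  "'a set \<Rightarrow> 'v set \<Rightarrow> ('v \<Rightarrow> 'a rel) \<Rightarrow> 'v set set \<Rightarrow> bool" where
  "single_crossing_tree A V P E \<longleftrightarrow>
     (\<forall>a\<in>A. \<forall>b\<in>A. a \<noteq> b \<longrightarrow>
        (\<exists>u w. {u, w} \<in> E \<and>
            (\<forall>x \<in> component V (E - {{u, w}}) u. (a, b) \<in> P x) \<and>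
            (\<forall>x \<in> component V (E - {{u, w}}) w. (b, a) \<in> P x))
        \<or> (\<forall>x\<in>V. (a, b) \<in> P x) \<or> (\<forall>x\<in>V. (b, a) \<in> P x))"

definition majority :: "'a rel list \<Rightarrow> 'a rel" where
  "majority Q = {(a, b). card {i. i < length Q \<and> (b, a) \<in> Q ! i}
                       < card {i. i < length Q \<and> (a, b) \<in> Q ! i}}"

definition condorcet_domain :: "'a set \<Rightarrow> 'a rel set \<Rightarrow> bool" where
  "condorcet_domain A C \<longleftrightarrow> (\<forall>R\<in>C. lin_order A R) \<and>
     (\<forall>Q. set Q \<subseteq> C \<longrightarrow> trans (majority Q))"

end

theory Submission imports Defs begin

text \<open>For alternatives a, b the voters preferring a to b form a halfspace of the voter graph: nobody,
  everybody, or one side of an edge whose removal separates the voters by their a-b preference. Halfspaces have the Helly property: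
  three pairwise intersecting ones share a vertex. If a profile drawn from the orders of P had
  a > b and b > c but not a > c in its majority relation, counting supporters shows that some voter
  ranks a over b and b over c, some a over b and c over a, and some b over c and c over a. The three
  halfspaces for (a, b), (b, c), (c, a) then pairwise intersect, so some voter would rank a over b
  over c over a.\<close>

lemma walk_stays_in_closed_set:
  assumes "walk V F xs" "hd xs \<in> X"
    and closed: "\<And>y z. y \<in> X \<Longrightarrow> {y, z} \<in> F \<Longrightarrow> z \<in> V \<Longrightarrow> z \<in> X"
    and "i < length xs"
  shows "xs ! i \<in> X"
  using \<open>i < length xs\<close>
proof (induction i)
  case 0
  then show ?case using assms(2) by (simp add: hd_conv_nth)
next
  case (Suc i)
  have "{xs ! i, xs ! Suc i} \<in> F" and "xs ! Suc i \<in> V"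
    using assms(1) Suc.prems unfolding walk_def by (auto dest: nth_mem)
  then show ?case using Suc closed by simp
qed

lemma component_subset_closed_set:
  assumes "s \<in> X" and "\<And>y z. y \<in> X \<Longrightarrow> {y, z} \<in> F \<Longrightarrow> z \<in> V \<Longrightarrow> z \<in> X"
  shows "component V F s \<subseteq> X"
proof
  fix x assume "x \<in> component V F s"
  then obtain xs where xs: "walk V F xs" "hd xs = s" "last xs = x"
    unfolding component_def reachable_def by blast
  then have "xs \<noteq> []" unfolding walk_def by blast
  then have "x = xs ! (length xs - 1)" "length xs - 1 < length xs"
    using xs(3) by (simp_all add: last_conv_nth)
  then show "x \<in> X" using walk_stays_in_closed_set[OF xs(1)] xs(2) assms by metis
qed

lemma component_refl: "u \<in> V \<Longrightarrow> u \<in> component V F u"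
  unfolding component_def reachable_def walk_def
  by (intro CollectI exI[of _ "[u]"]) simp

lemma component_subset: "component V F u \<subseteq> V"
  unfolding component_def reachable_def walk_def by (auto intro: last_in_set)

lemma component_edge_closed:
  assumes "y \<in> component V F u" "{y, z} \<in> F" "z \<in> V"
  shows "z \<in> component V F u"
proof -
  obtain xs where xs: "walk V F xs" "hd xs = u" "last xs = y"
    using assms(1) unfolding component_def reachable_def by blast
  have "xs \<noteq> []" using xs(1) unfolding walk_def by blast
  have "walk V F (xs @ [z])"
    unfolding walk_def
  proof (intro conjI allI impI)
    show "set (xs @ [z]) \<subseteq> V" using xs(1) assms(3) unfolding walk_def by auto
    fix i assume i: "Suc i < length (xs @ [z])"
    show "{(xs @ [z]) ! i, (xs @ [z]) ! Suc i} \<in> F"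
    proof (cases "Suc i < length xs")
      case True
      then show ?thesis using xs(1) unfolding walk_def by (simp add: nth_append)
    next
      case False
      then have "i = length xs - 1" "Suc i = length xs" using i by auto
      then show ?thesis using assms(2) xs(3) \<open>xs \<noteq> []\<close> by (simp add: nth_append last_conv_nth)
    qed
  qed simp
  then show ?thesis unfolding component_def reachable_def using xs \<open>xs \<noteq> []\<close> by force
qed

lemma graph_edge_in_vertices: "graph V E \<Longrightarrow> {u, w} \<in> E \<Longrightarrow> u \<in> V \<and> w \<in> V"
  unfolding graph_def by (metis doubleton_eq_iff)

lemma component_subset_after_edge_removal:
  assumes "component V (E - {f}) s \<inter> g = {}" "s \<in> component V (E - {g}) t"
  shows "component V (E - {f}) s \<subseteq> component V (E - {g}) t"
proof -
  let ?X = "component V (E - {f}) s \<inter> component V (E - {g}) t"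
  have "component V (E - {f}) s \<subseteq> ?X"
  proof (rule component_subset_closed_set)
    have "s \<in> V" using assms(2) component_subset[of V "E - {g}" t] by blast
    then show "s \<in> ?X" using assms(2) component_refl[of s V "E - {f}"] by blast
    fix y z assume y: "y \<in> ?X" and yz: "{y, z} \<in> E - {f}" and z: "z \<in> V"
    have "y \<notin> g" using y assms(1) by blast
    then have "{y, z} \<in> E - {g}" using yz by blast
    then show "z \<in> ?X" using y yz z component_edge_closed by (metis IntE IntI)
  qed
  then show ?thesis by blast
qed

lemma connected_edge_removal_cover:
  assumes "graph V E" "connected_graph V E" "{u, w} \<in> E"
  shows "V \<subseteq> component V (E - {{u, w}}) u \<union> component V (E - {{u, w}}) w"
proof -
  let ?C = "component V (E - {{u, w}}) u \<union> component V (E - {{u, w}}) w"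
  have uw: "u \<in> V" "w \<in> V" using graph_edge_in_vertices[OF assms(1,3)] by blast+
  have "component V E u \<subseteq> ?C"
  proof (rule component_subset_closed_set)
    show "u \<in> ?C" using component_refl[of u V] uw by blast
    fix y z assume y: "y \<in> ?C" and yz: "{y, z} \<in> E" and z: "z \<in> V"
    show "z \<in> ?C"
    proof (cases "{y, z} = {u, w}")
      case True
      then have "z = u \<or> z = w" by (auto simp: doubleton_eq_iff)
      then show ?thesis using component_refl[of u V] component_refl[of w V] uw by blast
    next
      case False
      then have "{y, z} \<in> E - {{u, w}}" using yz by blast
      then show ?thesis using y z component_edge_closed by (metis Un_iff)
    qed
  qed
  moreover have "V \<subseteq> component V E u"
    using assms(2) uw unfolding connected_graph_def component_def by blast
  ultimately show ?thesis by blast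
qed

definition bridge :: "'v set \<Rightarrow> 'v set set \<Rightarrow> 'v \<Rightarrow> 'v \<Rightarrow> bool" where
  "bridge V E u w \<longleftrightarrow> {u, w} \<in> E \<and>
     component V (E - {{u, w}}) u \<inter> component V (E - {{u, w}}) w = {}"

definition halfspace :: "'v set \<Rightarrow> 'v set set \<Rightarrow> 'v set \<Rightarrow> bool" where
  "halfspace V E H \<longleftrightarrow> H = {} \<or> H = V \<or>
     (\<exists>u w. bridge V E u w \<and> H = component V (E - {{u, w}}) u)"

lemma bridge_sides_nested_or_disjoint:
  assumes "graph V E" "connected_graph V E" "bridge V E u w" "bridge V E u' w'"
    and "u' \<notin> component V (E - {{u, w}}) u"
  defines "H \<equiv> component V (E - {{u, w}}) u" and "H' \<equiv> component V (E - {{u', w'}}) u'"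
  shows "H \<subseteq> H' \<or> H \<inter> H' = {}"
proof -
  define K where "K = component V (E - {{u, w}}) w"
  define K' where "K' = component V (E - {{u', w'}}) w'"
  have E: "{u, w} \<in> E" "{u', w'} \<in> E" and disj: "H \<inter> K = {}" "H' \<inter> K' = {}"
    using assms(3,4) unfolding bridge_def H_def H'_def K_def K'_def by auto
  have V: "u \<in> V" "u' \<in> V" "w' \<in> V"
    using graph_edge_in_vertices[OF assms(1) E(1)] graph_edge_in_vertices[OF assms(1) E(2)] by blast+
  have "u' \<in> K" using connected_edge_removal_cover[OF assms(1,2) E(1)] V assms(5)
    unfolding H_def K_def by blast
  show ?thesis
  proof (cases "{u', w'} = {u, w}")
    case True
    have "u' \<noteq> u" using assms(5) component_refl[of u V] V by blast
    then have "u' = w" using True by (auto simp: doubleton_eq_iff)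
    then have "H' = K" using True unfolding H'_def K_def by simp
    then show ?thesis using disj by blast
  next
    case False
    then have "w' \<in> K" using \<open>u' \<in> K\<close> E(2) V unfolding K_def
      by (blast intro: component_edge_closed)
    then have avoid: "H \<inter> {u', w'} = {}" using \<open>u' \<in> K\<close> disj by blast
    have "u \<in> H' \<or> u \<in> K'" using connected_edge_removal_cover[OF assms(1,2) E(2)] V
      unfolding H'_def K'_def by blast
    then show ?thesis
      using component_subset_after_edge_removal[of V E "{u, w}" u "{u', w'}"] avoid disj
      unfolding H_def H'_def K'_def by blast
  qed
qed

lemma halfspace_subset: "halfspace V E H \<Longrightarrow> H \<subseteq> V"
  unfolding halfspace_def using component_subset[of V "E - _"] by blast

lemma halfspace_bridge:
  assumes "halfspace V E H" "H \<noteq> {}" "H \<noteq> V"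
  obtains u w where "bridge V E u w" "H = component V (E - {{u, w}}) u"
  using assms unfolding halfspace_def by blast

text \<open>The root of the third halfspace lies in each of the other two: otherwise that one would be
  nested in, or disjoint from, the third.\<close>

lemma halfspaces_helly:
  assumes "graph V E" "connected_graph V E"
    and "halfspace V E H1" "halfspace V E H2" "halfspace V E H3"
    and "H1 \<inter> H2 \<noteq> {}" "H1 \<inter> H3 \<noteq> {}" "H2 \<inter> H3 \<noteq> {}"
  shows "H1 \<inter> H2 \<inter> H3 \<noteq> {}"
proof
  assume empty: "H1 \<inter> H2 \<inter> H3 = {}"
  have "H1 \<noteq> V" "H2 \<noteq> V" "H3 \<noteq> V" and "H1 \<noteq> {}" "H2 \<noteq> {}" "H3 \<noteq> {}"
    using empty assms(6-8) halfspace_subset[OF assms(3)] halfspace_subset[OF assms(4)]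
      halfspace_subset[OF assms(5)] by auto
  then obtain u1 w1 u2 w2 u3 w3 where
    b: "bridge V E u1 w1" "bridge V E u2 w2" "bridge V E u3 w3" and
    H: "H1 = component V (E - {{u1, w1}}) u1" "H2 = component V (E - {{u2, w2}}) u2"
       "H3 = component V (E - {{u3, w3}}) u3"
    using halfspace_bridge assms(3-5) by metis
  have "u3 \<in> H1"
    using bridge_sides_nested_or_disjoint[OF assms(1,2) b(1,3)] H empty assms(6,7) by blast
  moreover have "u3 \<in> H2"
    using bridge_sides_nested_or_disjoint[OF assms(1,2) b(2,3)] H empty assms(6,8) by blast
  moreover have "u3 \<in> H3"
    using H(3) component_refl graph_edge_in_vertices[OF assms(1)] b(3) unfolding bridge_def
    by metis
  ultimately show False using empty by blast
qed

lemma lin_order_asym: "lin_order A R \<Longrightarrow> (a, b) \<in> R \<Longrightarrow> (b, a) \<notin> R"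
  unfolding lin_order_def trans_def irrefl_def by blast

lemma single_crossing_preference_halfspace:
  assumes lin: "\<forall>v\<in>V. lin_order A (P v)" and "graph V E" "connected_graph V E"
    and sc: "single_crossing_tree A V P E"
  shows "halfspace V E {v \<in> V. (a, b) \<in> P v}"
proof (cases "a \<in> A \<and> b \<in> A \<and> a \<noteq> b")
  case False
  then have "{v \<in> V. (a, b) \<in> P v} = {}"
    using lin unfolding lin_order_def irrefl_def by blast
  then show ?thesis unfolding halfspace_def by blast
next
  case True
  from sc True consider
    (cut) u w where "{u, w} \<in> E" "\<forall>x \<in> component V (E - {{u, w}}) u. (a, b) \<in> P x"
      "\<forall>x \<in> component V (E - {{u, w}}) w. (b, a) \<in> P x"
    | (all) "\<forall>x\<in>V. (a, b) \<in> P x"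
    | (none) "\<forall>x\<in>V. (b, a) \<in> P x"
    unfolding single_crossing_tree_def by metis
  then show ?thesis
  proof cases
    case (cut u w)
    let ?Cu = "component V (E - {{u, w}}) u" and ?Cw = "component V (E - {{u, w}}) w"
    have opposite: "(a, b) \<notin> P x" if "x \<in> ?Cw" for x
    proof -
      have "lin_order A (P x)" using that lin component_subset[of V "E - {{u, w}}" w] by blast
      then show ?thesis using lin_order_asym that cut(3) by metis
    qed
    then have "bridge V E u w" using cut(1,2) unfolding bridge_def by blast
    moreover have "{v \<in> V. (a, b) \<in> P v} = ?Cu"
      using connected_edge_removal_cover[OF assms(2,3) cut(1)] opposite cut(2)
        component_subset[of V _ u]
      by blast
    ultimately show ?thesis unfolding halfspace_def by blast
  next
    case all
    then show ?thesis unfolding halfspace_def by auto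
  next
    case none
    then have "{v \<in> V. (a, b) \<in> P v} = {}" using lin lin_order_asym by fast
    then show ?thesis unfolding halfspace_def by blast
  qed
qed

definition supporters :: "'a rel list \<Rightarrow> 'a \<Rightarrow> 'a \<Rightarrow> nat set" where
  "supporters Q a b = {i. i < length Q \<and> (a, b) \<in> Q ! i}"

lemma majority_iff_supporters:
  "(a, b) \<in> majority Q \<longleftrightarrow> card (supporters Q b a) < card (supporters Q a b)"
  unfolding majority_def supporters_def by simp

lemma majority_asym: "(a, b) \<in> majority Q \<Longrightarrow> (b, a) \<notin> majority Q"
  unfolding majority_iff_supporters by simp

lemma majority_in_domain:
  assumes "\<forall>R\<in>set Q. lin_order A R" "(a, b) \<in> majority Q"
  shows "a \<in> A" "b \<in> A"
proof -
  have "supporters Q a b \<noteq> {}" using assms(2) unfolding majority_iff_supporters by auto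
  then obtain i where "i < length Q" "(a, b) \<in> Q ! i" unfolding supporters_def by blast
  then show "a \<in> A" "b \<in> A" using assms(1) nth_mem unfolding lin_order_def by blast+
qed

lemma supporters_subset_if_not_shared:
  assumes "\<forall>R\<in>set Q. lin_order A R" "z \<in> A" "w \<in> A" "z \<noteq> w"
    and "\<not> (\<exists>R\<in>set Q. (x, y) \<in> R \<and> (z, w) \<in> R)"
  shows "supporters Q x y \<subseteq> supporters Q w z"
proof
  fix i assume "i \<in> supporters Q x y"
  then have i: "i < length Q" "(x, y) \<in> Q ! i" unfolding supporters_def by simp_all
  then have "Q ! i \<in> set Q" by simp
  then have "lin_order A (Q ! i)" "(z, w) \<notin> Q ! i" using assms(1,5) i(2) by blast+
  then have "(w, z) \<in> Q ! i" using assms(2-4) unfolding lin_order_def total_on_def by blast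
  then show "i \<in> supporters Q w z" using i(1) unfolding supporters_def by simp
qed

text \<open>If no voter ranked both x over y and z over w, then every supporter of (x, y) would support
  (w, z) and every supporter of (z, w) would support (y, x); counting, (w, z) would win.\<close>

lemma majority_shared_order:
  assumes lin: "\<forall>R\<in>set Q. lin_order A R"
    and "(x, y) \<in> majority Q" "(w, z) \<notin> majority Q" "z \<in> A" "w \<in> A" "z \<noteq> w"
  shows "\<exists>R\<in>set Q. (x, y) \<in> R \<and> (z, w) \<in> R"
proof (rule ccontr)
  assume not_shared: "\<not> (\<exists>R\<in>set Q. (x, y) \<in> R \<and> (z, w) \<in> R)"
  have "x \<in> A" "y \<in> A" using majority_in_domain[OF lin assms(2)] .
  have "x \<noteq> y" using assms(2) majority_asym[of x y Q] by blast
  have fin: "finite (supporters Q p q)" for p q unfolding supporters_def by simp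
  have "card (supporters Q z w) \<le> card (supporters Q y x)"
    using supporters_subset_if_not_shared[OF lin \<open>x \<in> A\<close> \<open>y \<in> A\<close> \<open>x \<noteq> y\<close>] not_shared
    by (meson card_mono fin)
  also have "\<dots> < card (supporters Q x y)"
    using assms(2) unfolding majority_iff_supporters .
  also have "\<dots> \<le> card (supporters Q w z)"
    using supporters_subset_if_not_shared[OF lin assms(4-6) not_shared] by (meson card_mono fin)
  finally show False using assms(3) unfolding majority_iff_supporters by simp
qed

lemma majority_cycle_shared_orders:
  assumes lin: "\<forall>R\<in>set Q. lin_order A R"
    and ab: "(a, b) \<in> majority Q" and bc: "(b, c) \<in> majority Q" and ac: "(a, c) \<notin> majority Q"
  shows "\<exists>R\<in>set Q. (a, b) \<in> R \<and> (b, c) \<in> R"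
    and "\<exists>R\<in>set Q. (a, b) \<in> R \<and> (c, a) \<in> R"
    and "\<exists>R\<in>set Q. (b, c) \<in> R \<and> (c, a) \<in> R"
proof -
  have A: "a \<in> A" "b \<in> A" "c \<in> A"
    using majority_in_domain[OF lin ab] majority_in_domain[OF lin bc] by blast+
  have "b \<noteq> c" using bc majority_asym[of b c Q] by blast
  have "c \<noteq> a" using ab bc majority_asym[of a b Q] by blast
  show "\<exists>R\<in>set Q. (a, b) \<in> R \<and> (b, c) \<in> R"
    using majority_shared_order[OF lin ab majority_asym[OF bc] A(2,3) \<open>b \<noteq> c\<close>] .
  show "\<exists>R\<in>set Q. (a, b) \<in> R \<and> (c, a) \<in> R"
    using majority_shared_order[OF lin ab ac A(3,1) \<open>c \<noteq> a\<close>] .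
  show "\<exists>R\<in>set Q. (b, c) \<in> R \<and> (c, a) \<in> R"
    using majority_shared_order[OF lin bc ac A(3,1) \<open>c \<noteq> a\<close>] .
qed

theorem theorem2:
  fixes A :: "'a set" and V :: "'v set" and P :: "'v \<Rightarrow> 'a rel" and E :: "'v set set"
  assumes "finite A"
    and "\<forall>v\<in>V. lin_order A (P v)"
    and "tree V E"
    and "single_crossing_tree A V P E"
  shows "condorcet_domain A (P ` V)"
  unfolding condorcet_domain_def
proof (intro conjI allI impI)
  show "\<forall>R\<in>P ` V. lin_order A R" using assms(2) by blast
  fix Q assume Q: "set Q \<subseteq> P ` V"
  then have lin: "\<forall>R\<in>set Q. lin_order A R" using assms(2) by blast
  have graph: "graph V E" "connected_graph V E" using assms(3) unfolding tree_def by auto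
  define S where "S x y = {v \<in> V. (x, y) \<in> P v}" for x y
  have half: "halfspace V E (S x y)" for x y
    unfolding S_def using single_crossing_preference_halfspace[OF assms(2) graph assms(4)] .
  have meet: "S x y \<inter> S z w \<noteq> {}" if "\<exists>R\<in>set Q. (x, y) \<in> R \<and> (z, w) \<in> R" for x y z w
    using that Q unfolding S_def by blast
  show "trans (majority Q)"
  proof (rule transI, rule ccontr)
    fix a b c assume cycle: "(a, b) \<in> majority Q" "(b, c) \<in> majority Q" "(a, c) \<notin> majority Q"
    have "S a b \<inter> S b c \<inter> S c a \<noteq> {}"
      using halfspaces_helly[OF graph half half half]
        meet[OF majority_cycle_shared_orders(1)[OF lin cycle]]
        meet[OF majority_cycle_shared_orders(2)[OF lin cycle]]
        meet[OF majority_cycle_shared_orders(3)[OF lin cycle]] .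
    then show False
      using assms(2) unfolding S_def lin_order_def trans_def irrefl_def by blast
  qed
qed

end
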